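(* Let $k$ be a field and $\mathsf{E}$ a left strictly locally finite $k$-linear category. Then the class of right $\mathsf{E}$-modules isomorphic to $\Upsilon_{\mathsf{E}^{op}}(\mathcal{N})$ for some locally finite right $\mathcal{C}_\mathsf{E}$-comodule $\mathcal{N}$ is closed under extensions in the category of right $\mathsf{E}$-modules (and in the category of locally finite right $\mathsf{E}$-modules): if $0\to L\to M\to N\to0$ is a short exact sequence of right $\mathsf{E}$-modules and $L,N$ belong to this class, then so does $M$.
   Context: A small $k$-linear category $\mathsf{E}$ has $k$-vector spaces $\operatorname{Hom}_\mathsf{E}(x,y)$, $k$-bilinear associative composition and identities with $\mathrm{id}_x\ne0$. A right $\mathsf{E}$-module is a $k$-linear functor $\mathsf{E}^{op}\to k\text{-Vect}$ (action maps $\operatorname{Hom}_\mathsf{E}(x,y)\otimes_kN(y)\to N(x)$); locally finite if all values are finite-dimensional. Write $x\preceq y$ if there are $n\ge1$ and objects $x=z_0,\dots,z_n=y$ with $\operatorname{Hom}_\mathsf{E}(z_{i-1},z_i)\neq0$ for all $i$; $x\prec y$ means $x\preceq y$ and not $y\preceq x$. $\mathsf{E}$ is locally finite if all Hom spaces are finite-dimensional and every $\{z:x\preceq z\preceq y\}$ is finite; left strictly locally finite if moreover for every $y$ there is a finite set $X_y$ of objects with $x\prec y$ for $x\in X_y$ such that every $f:z\to y$ with $z\prec y$ equals $\sum_{i=1}^nh_ig_i$ ($n\ge0$) with $g_i:z\to x_i$, $h_i:x_i\to y$, $x_i\in X_y$. $\mathcal{C}_\mathsf{E}=\bigoplus_{x,y}\mathcal{C}^{x,y}$,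 $\mathcal{C}^{x,y}=\operatorname{Hom}_\mathsf{E}(x,y)^*$; counit zero on $\mathcal{C}^{x,y}$ for $x\ne y$, evaluation at $\mathrm{id}_x$ on $\mathcal{C}^{x,x}$; comultiplication $\mathcal{C}^{x,y}\to\bigoplus_z\mathcal{C}^{x,z}\otimes\mathcal{C}^{z,y}$ dual to composition $g\otimes h\mapsto hg$. For a right comodule $(\mathcal{N},\nu:\mathcal{N}\to\mathcal{N}\otimes\mathcal{C}_\mathsf{E})$, $\varphi\cdot n=(\mathrm{id}\otimes\varphi)\nu(n)$. With $e_x$ evaluation at $\mathrm{id}_x$ on $\mathcal{C}^{x,x}$ (zero elsewhere) and $\mathrm{ev}_f$, for $f\in\operatorname{Hom}_\mathsf{E}(x,y)$, evaluation at $f$ on $\mathcal{C}^{x,y}$ (zero elsewhere): $\Upsilon_{\mathsf{E}^{op}}(\mathcal{N})(x)=e_x\cdot\mathcal{N}$ and $f$ acts $e_y\cdot\mathcal{N}\to e_x\cdot\mathcal{N}$ by $n\mapsto\mathrm{ev}_f\cdot n$. $\mathcal{N}$ is locally finite if $\Upsilon_{\mathsf{E}^{op}}(\mathcal{N})$ is. *)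

theory Defs
  imports Complex_Main "HOL-Library.Function_Algebras"
begin

definition fin_dim :: "('k::field \<Rightarrow> 'v::ab_group_add \<Rightarrow> 'v) \<Rightarrow> 'v set \<Rightarrow> bool" where
  "fin_dim sc S \<longleftrightarrow> (\<exists>B. finite B \<and> module.span sc B = S)"

definition lin_on :: "('k::field \<Rightarrow> 'v::ab_group_add \<Rightarrow> 'v) \<Rightarrow> ('k \<Rightarrow> 'u::ab_group_add \<Rightarrow> 'u)
    \<Rightarrow> 'v set \<Rightarrow> ('v \<Rightarrow> 'u) \<Rightarrow> bool" where
  "lin_on s1 s2 S f \<longleftrightarrow> (\<forall>x\<in>S. \<forall>y\<in>S. f (x + y) = f x + f y) \<and> (\<forall>c. \<forall>x\<in>S. f (s1 c x) = s2 c (f x))"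

text \<open>Objects: the set Ob. Morphisms x -> y: the subspace Hom x y of the ambient space 'a.
  cmp x y z h g is the composite h g of g : x -> y and h : y -> z.\<close>

record ('o, 'a, 'k) klincat =
  Ob :: "'o set"
  Hom :: "'o \<Rightarrow> 'o \<Rightarrow> 'a set"
  cmp :: "'o \<Rightarrow> 'o \<Rightarrow> 'o \<Rightarrow> 'a \<Rightarrow> 'a \<Rightarrow> 'a"
  ident :: "'o \<Rightarrow> 'a"
  msc :: "'k \<Rightarrow> 'a \<Rightarrow> 'a"

definition klin_cat :: "('o, 'a::ab_group_add, 'k::field) klincat \<Rightarrow> bool" where
  "klin_cat E \<longleftrightarrow> vector_space (msc E)
   \<and> (\<forall>x\<in>Ob E. \<forall>y\<in>Ob E. module.subspace (msc E) (Hom E x y))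
   \<and> (\<forall>x\<in>Ob E. ident E x \<in> Hom E x x \<and> ident E x \<noteq> 0)
   \<and> (\<forall>x\<in>Ob E. \<forall>y\<in>Ob E. \<forall>z\<in>Ob E. \<forall>g\<in>Hom E x y. \<forall>h\<in>Hom E y z.
        cmp E x y z h g \<in> Hom E x z)
   \<and> (\<forall>x\<in>Ob E. \<forall>y\<in>Ob E. \<forall>z\<in>Ob E. \<forall>g\<in>Hom E x y.
        lin_on (msc E) (msc E) (Hom E y z) (\<lambda>h. cmp E x y z h g))
   \<and> (\<forall>x\<in>Ob E. \<forall>y\<in>Ob E. \<forall>z\<in>Ob E. \<forall>h\<in>Hom E y z.
        lin_on (msc E) (msc E) (Hom E x y) (\<lambda>g. cmp E x y z h g))
   \<and> (\<forall>w\<in>Ob E. \<forall>x\<in>Ob E. \<forall>y\<in>Ob E. \<forall>z\<in>Ob E.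
        \<forall>f\<in>Hom E w x. \<forall>g\<in>Hom E x y. \<forall>h\<in>Hom E y z.
        cmp E w y z h (cmp E w x y g f) = cmp E w x z (cmp E x y z h g) f)
   \<and> (\<forall>x\<in>Ob E. \<forall>y\<in>Ob E. \<forall>f\<in>Hom E x y.
        cmp E x y y (ident E y) f = f \<and> cmp E x x y f (ident E x) = f)"

definition hom_nz :: "('o, 'a::ab_group_add, 'k) klincat \<Rightarrow> 'o \<Rightarrow> 'o \<Rightarrow> bool" where
  "hom_nz E x y \<longleftrightarrow> x \<in> Ob E \<and> y \<in> Ob E \<and> Hom E x y \<noteq> {0}"

definition obj_le :: "('o, 'a::ab_group_add, 'k) klincat \<Rightarrow> 'o \<Rightarrow> 'o \<Rightarrow> bool" where
  "obj_le E = (hom_nz E)\<^sup>+\<^sup>+"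

definition obj_less :: "('o, 'a::ab_group_add, 'k) klincat \<Rightarrow> 'o \<Rightarrow> 'o \<Rightarrow> bool" where
  "obj_less E x y \<longleftrightarrow> obj_le E x y \<and> \<not> obj_le E y x"

definition locally_finite_cat :: "('o, 'a::ab_group_add, 'k::field) klincat \<Rightarrow> bool" where
  "locally_finite_cat E \<longleftrightarrow>
     (\<forall>x\<in>Ob E. \<forall>y\<in>Ob E. fin_dim (msc E) (Hom E x y))
   \<and> (\<forall>x\<in>Ob E. \<forall>y\<in>Ob E. finite {z \<in> Ob E. obj_le E x z \<and> obj_le E z y})"

definition left_strictly_locally_finite :: "('o, 'a::ab_group_add, 'k::field) klincat \<Rightarrow> bool" where
  "left_strictly_locally_finite E \<longleftrightarrow> locally_finite_cat E \<and>
     (\<forall>y\<in>Ob E. \<exists>X. finite X \<and> X \<subseteq> Ob E \<and> (\<forall>x\<in>X. obj_less E x y) \<and>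
        (\<forall>z\<in>Ob E. obj_less E z y \<longrightarrow> (\<forall>f\<in>Hom E z y.
           \<exists>(n::nat) xs g h. (\<forall>i<n. xs i \<in> X \<and> g i \<in> Hom E z (xs i) \<and> h i \<in> Hom E (xs i) y)
             \<and> f = (\<Sum>i<n. cmp E z (xs i) y (h i) (g i)))))"

text \<open>A right module M: values Val M x (subspaces of 'w) and action
  Act M x y f : Val M y -> Val M x for f in Hom x y (m \<mapsto> m f).\<close>

record ('o, 'a, 'w) rmod =
  Val :: "'o \<Rightarrow> 'w set"
  Act :: "'o \<Rightarrow> 'o \<Rightarrow> 'a \<Rightarrow> 'w \<Rightarrow> 'w"

definition is_rmod :: "('o, 'a::ab_group_add, 'k::field) klincat \<Rightarrow> ('k \<Rightarrow> 'w::ab_group_add \<Rightarrow> 'w)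
    \<Rightarrow> ('o, 'a, 'w) rmod \<Rightarrow> bool" where
  "is_rmod E sc M \<longleftrightarrow> vector_space sc
   \<and> (\<forall>x\<in>Ob E. module.subspace sc (Val M x))
   \<and> (\<forall>x\<in>Ob E. \<forall>y\<in>Ob E. \<forall>f\<in>Hom E x y. \<forall>m\<in>Val M y. Act M x y f m \<in> Val M x)
   \<and> (\<forall>x\<in>Ob E. \<forall>y\<in>Ob E. \<forall>f\<in>Hom E x y. lin_on sc sc (Val M y) (Act M x y f))
   \<and> (\<forall>x\<in>Ob E. \<forall>y\<in>Ob E. \<forall>m\<in>Val M y. lin_on (msc E) sc (Hom E x y) (\<lambda>f. Act M x y f m))
   \<and> (\<forall>x\<in>Ob E. \<forall>m\<in>Val M x. Act M x x (ident E x) m = m)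
   \<and> (\<forall>x\<in>Ob E. \<forall>y\<in>Ob E. \<forall>z\<in>Ob E. \<forall>g\<in>Hom E x y. \<forall>h\<in>Hom E y z. \<forall>m\<in>Val M z.
        Act M x z (cmp E x y z h g) m = Act M x y g (Act M y z h m))"

definition locally_finite_rmod :: "('o, 'a::ab_group_add, 'k::field) klincat \<Rightarrow> ('k \<Rightarrow> 'w::ab_group_add \<Rightarrow> 'w)
    \<Rightarrow> ('o, 'a, 'w) rmod \<Rightarrow> bool" where
  "locally_finite_rmod E sc M \<longleftrightarrow> (\<forall>x\<in>Ob E. fin_dim sc (Val M x))"

definition rmod_hom :: "('o, 'a::ab_group_add, 'k::field) klincat
    \<Rightarrow> ('k \<Rightarrow> 'v::ab_group_add \<Rightarrow> 'v) \<Rightarrow> ('o, 'a, 'v) rmod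
    \<Rightarrow> ('k \<Rightarrow> 'w::ab_group_add \<Rightarrow> 'w) \<Rightarrow> ('o, 'a, 'w) rmod
    \<Rightarrow> ('o \<Rightarrow> 'v \<Rightarrow> 'w) \<Rightarrow> bool" where
  "rmod_hom E s1 M1 s2 M2 \<phi> \<longleftrightarrow>
     (\<forall>x\<in>Ob E. lin_on s1 s2 (Val M1 x) (\<phi> x) \<and> (\<forall>m\<in>Val M1 x. \<phi> x m \<in> Val M2 x))
   \<and> (\<forall>x\<in>Ob E. \<forall>y\<in>Ob E. \<forall>f\<in>Hom E x y. \<forall>m\<in>Val M1 y.
        \<phi> x (Act M1 x y f m) = Act M2 x y f (\<phi> y m))"

definition rmod_iso :: "('o, 'a::ab_group_add, 'k::field) klincat
    \<Rightarrow> ('k \<Rightarrow> 'v::ab_group_add \<Rightarrow> 'v) \<Rightarrow> ('o, 'a, 'v) rmod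
    \<Rightarrow> ('k \<Rightarrow> 'w::ab_group_add \<Rightarrow> 'w) \<Rightarrow> ('o, 'a, 'w) rmod
    \<Rightarrow> ('o \<Rightarrow> 'v \<Rightarrow> 'w) \<Rightarrow> bool" where
  "rmod_iso E s1 M1 s2 M2 \<phi> \<longleftrightarrow> rmod_hom E s1 M1 s2 M2 \<phi>
     \<and> (\<forall>x\<in>Ob E. bij_betw (\<phi> x) (Val M1 x) (Val M2 x))"

definition rmod_isomorphic :: "('o, 'a::ab_group_add, 'k::field) klincat
    \<Rightarrow> ('k \<Rightarrow> 'v::ab_group_add \<Rightarrow> 'v) \<Rightarrow> ('o, 'a, 'v) rmod
    \<Rightarrow> ('k \<Rightarrow> 'w::ab_group_add \<Rightarrow> 'w) \<Rightarrow> ('o, 'a, 'w) rmod \<Rightarrow> bool" where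
  "rmod_isomorphic E s1 M1 s2 M2 \<longleftrightarrow> (\<exists>\<phi>. rmod_iso E s1 M1 s2 M2 \<phi>)"

definition short_exact :: "('o, 'a::ab_group_add, 'k::field) klincat
    \<Rightarrow> ('k \<Rightarrow> 'l::ab_group_add \<Rightarrow> 'l) \<Rightarrow> ('o, 'a, 'l) rmod
    \<Rightarrow> ('k \<Rightarrow> 'm::ab_group_add \<Rightarrow> 'm) \<Rightarrow> ('o, 'a, 'm) rmod
    \<Rightarrow> ('k \<Rightarrow> 'n::ab_group_add \<Rightarrow> 'n) \<Rightarrow> ('o, 'a, 'n) rmod
    \<Rightarrow> ('o \<Rightarrow> 'l \<Rightarrow> 'm) \<Rightarrow> ('o \<Rightarrow> 'm \<Rightarrow> 'n) \<Rightarrow> bool" where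
  "short_exact E sL L sM M sN N i p \<longleftrightarrow>
     rmod_hom E sL L sM M i \<and> rmod_hom E sM M sN N p
   \<and> (\<forall>x\<in>Ob E. inj_on (i x) (Val L x)
        \<and> p x ` Val M x = Val N x
        \<and> i x ` Val L x = {m \<in> Val M x. p x m = 0})"

text \<open>C_E is the direct sum of the duals Hom(x,y)^*.  Since all Hom spaces of a locally finite
  category are finite-dimensional, N \<otimes> Hom(x,y)^* is canonically the space of linear maps
  Hom(x,y) -> N, and N \<otimes> C^{x,z} \<otimes> C^{z',y} the space of bilinear maps
  Hom(x,z) \<times> Hom(z',y) -> N.  Accordingly a right comodule (N, \<nu>) is given by its carrier
  Car (a subspace of 'c) and Coact n x y f = (id \<otimes> ev_f)(\<nu> n) for f in Hom x y.\<close>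

record ('o, 'a, 'c) rcomod =
  Car :: "'c set"
  Coact :: "'c \<Rightarrow> 'o \<Rightarrow> 'o \<Rightarrow> 'a \<Rightarrow> 'c"

definition is_rcomod :: "('o, 'a::ab_group_add, 'k::field) klincat \<Rightarrow> ('k \<Rightarrow> 'c::ab_group_add \<Rightarrow> 'c)
    \<Rightarrow> ('o, 'a, 'c) rcomod \<Rightarrow> bool" where
  "is_rcomod E sc N \<longleftrightarrow> vector_space sc
   \<and> module.subspace sc (Car N)
   \<comment> \<open>\<nu> : N -> N \<otimes> C_E is a well-defined linear map\<close>
   \<and> (\<forall>n\<in>Car N. \<forall>x\<in>Ob E. \<forall>y\<in>Ob E. \<forall>f\<in>Hom E x y. Coact N n x y f \<in> Car N)
   \<and> (\<forall>x\<in>Ob E. \<forall>y\<in>Ob E. \<forall>f\<in>Hom E x y. lin_on sc sc (Car N) (\<lambda>n. Coact N n x y f))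
   \<and> (\<forall>n\<in>Car N. \<forall>x\<in>Ob E. \<forall>y\<in>Ob E. lin_on (msc E) sc (Hom E x y) (Coact N n x y))
   \<and> (\<forall>n\<in>Car N. finite {(x, y). x \<in> Ob E \<and> y \<in> Ob E \<and> (\<exists>f\<in>Hom E x y. Coact N n x y f \<noteq> 0)})
   \<comment> \<open>counit: (id \<otimes> \<epsilon>) \<nu> = id\<close>
   \<and> (\<forall>n\<in>Car N. (\<Sum>x\<in>{x \<in> Ob E. Coact N n x x (ident E x) \<noteq> 0}. Coact N n x x (ident E x)) = n)
   \<comment> \<open>coassociativity: (\<nu> \<otimes> id) \<nu> = (id \<otimes> \<Delta>) \<nu>, componentwise\<close>
   \<and> (\<forall>n\<in>Car N. \<forall>x\<in>Ob E. \<forall>z\<in>Ob E. \<forall>z'\<in>Ob E. \<forall>y\<in>Ob E. \<forall>g\<in>Hom E x z. \<forall>h\<in>Hom E z' y.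
        Coact N (Coact N n z' y h) x z g = (if z = z' then Coact N n x y (cmp E x z y h g) else 0))"

text \<open>The functor Upsilon: Upsilon(N)(x) = e_x \<cdot> N, and f : x -> y acts by n \<mapsto> ev_f \<cdot> n.\<close>

definition Upsilon :: "('o, 'a::ab_group_add, 'k::field) klincat \<Rightarrow> ('o, 'a, 'c) rcomod \<Rightarrow> ('o, 'a, 'c) rmod" where
  "Upsilon E N = \<lparr> Val = (\<lambda>x. (\<lambda>n. Coact N n x x (ident E x)) ` Car N),
                   Act = (\<lambda>x y f n. Coact N n x y f) \<rparr>"

definition locally_finite_rcomod :: "('o, 'a::ab_group_add, 'k::field) klincat \<Rightarrow> ('k \<Rightarrow> 'c::ab_group_add \<Rightarrow> 'c)
    \<Rightarrow> ('o, 'a, 'c) rcomod \<Rightarrow> bool" where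
  "locally_finite_rcomod E sc N \<longleftrightarrow> locally_finite_rmod E sc (Upsilon E N)"

text \<open>M is isomorphic to Upsilon(N) for a locally finite right C_E-comodule N whose underlying
  space lives in the type 'c (the type is fixed by the itself-argument).\<close>

definition in_Upsilon_class :: "('o, 'a::ab_group_add, 'k::field) klincat \<Rightarrow> ('k \<Rightarrow> 'w::ab_group_add \<Rightarrow> 'w)
    \<Rightarrow> ('o, 'a, 'w) rmod \<Rightarrow> 'c::ab_group_add itself \<Rightarrow> bool" where
  "in_Upsilon_class E sc M _ \<longleftrightarrow> (\<exists>(scN :: 'k \<Rightarrow> 'c \<Rightarrow> 'c) (N :: ('o, 'a, 'c) rcomod).
      is_rcomod E scN N \<and> locally_finite_rcomod E scN N
      \<and> rmod_isomorphic E sc M scN (Upsilon E N))"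

end

theory Submission
  imports Defs
begin

text \<open>A right E-module M lies in the class iff all its values are finite-dimensional and it is
  finitely supported: for m in M(y), m f is nonzero for morphisms f : x -> y out of only finitely
  many objects x.  Necessity is the finiteness condition on the coaction; conversely, the finitely
  supported sections of the direct sum of the values of M form a comodule whose image under Upsilon
  is M.  Finite dimension passes to extensions by linear algebra.  For finite support, fix m in
  M(y) and let S be the support of its image in N.  Elements whose image has support in S are
  treated by well-founded induction along the strict order on the finite set S: off S their image
  vanishes, so they come from L; at z in S, local finiteness leaves finitely many objects of the
  class of z, and every other morphism into z factors through the finite set X_z, whose objects
  are strictly smaller.\<close>

section \<open>Linear maps on subspaces\<close>

lemma lin_onI:
  assumes "\<And>x y. x \<in> S \<Longrightarrow> y \<in> S \<Longrightarrow> f (x + y) = f x + f y"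
    and "\<And>c x. x \<in> S \<Longrightarrow> f (s1 c x) = s2 c (f x)"
  shows "lin_on s1 s2 S f"
  using assms by (simp add: lin_on_def)

lemma lin_on_add: "lin_on s1 s2 S f \<Longrightarrow> x \<in> S \<Longrightarrow> y \<in> S \<Longrightarrow> f (x + y) = f x + f y"
  by (simp add: lin_on_def)

lemma lin_on_scale: "lin_on s1 s2 S f \<Longrightarrow> x \<in> S \<Longrightarrow> f (s1 c x) = s2 c (f x)"
  by (simp add: lin_on_def)

lemma lin_on_subset: "lin_on s1 s2 S f \<Longrightarrow> T \<subseteq> S \<Longrightarrow> lin_on s1 s2 T f"
  unfolding lin_on_def by blast

lemma lin_on_zero:
  assumes "module s1" "module.subspace s1 S" "lin_on s1 s2 S f"
  shows "f 0 = 0"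
proof -
  have "0 \<in> S"
    using module.subspace_0[OF assms(1,2)] .
  then have "f (0 + 0) = f 0 + f 0"
    using lin_on_add[OF assms(3)] by blast
  then show ?thesis by simp
qed

lemma lin_on_diff:
  assumes "module s1" "module.subspace s1 S" "lin_on s1 s2 S f" "a \<in> S" "b \<in> S"
  shows "f (a - b) = f a - f b"
proof -
  have "f (a - b + b) = f (a - b) + f b"
    by (rule lin_on_add[OF assms(3) module.subspace_diff[OF assms(1,2,4,5)] assms(5)])
  then show ?thesis by (simp add: eq_diff_eq)
qed

lemma lin_on_sum:
  assumes "module s1" "module.subspace s1 S" "lin_on s1 s2 S f" "\<And>c. c \<in> C \<Longrightarrow> v c \<in> S"
  shows "f (\<Sum>c\<in>C. v c) = (\<Sum>c\<in>C. f (v c))"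
  using assms(4)
proof (induction C rule: infinite_finite_induct)
  case (insert c C)
  have "(\<Sum>c\<in>C. v c) \<in> S"
    by (rule module.subspace_sum[OF assms(1,2)]) (simp add: insert.prems)
  then have "f (v c + (\<Sum>c\<in>C. v c)) = f (v c) + f (\<Sum>c\<in>C. v c)"
    using insert.prems by (intro lin_on_add[OF assms(3)]) auto
  with insert show ?case by simp
qed (use lin_on_zero[OF assms(1-3)] in simp_all)

lemma subspace_image:
  assumes "module s1" "module s2" "module.subspace s1 S" "lin_on s1 s2 S \<phi>"
  shows "module.subspace s2 (\<phi> ` S)"
proof (rule module.subspaceI[OF assms(2)])
  show "0 \<in> \<phi> ` S"
    using lin_on_zero[OF assms(1,3,4)] module.subspace_0[OF assms(1,3)] by force
next
  fix u v assume "u \<in> \<phi> ` S" "v \<in> \<phi> ` S"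
  then obtain x y where "x \<in> S" "y \<in> S" "u = \<phi> x" "v = \<phi> y" by blast
  then have "x + y \<in> S" "u + v = \<phi> (x + y)"
    using assms(4) module.subspace_add[OF assms(1,3)] by (simp_all add: lin_on_def)
  then show "u + v \<in> \<phi> ` S" by blast
next
  fix c u assume "u \<in> \<phi> ` S"
  then obtain x where "x \<in> S" "u = \<phi> x" by blast
  then have "s1 c x \<in> S" "s2 c u = \<phi> (s1 c x)"
    using assms(4) module.subspace_scale[OF assms(1,3)] by (simp_all add: lin_on_def)
  then show "s2 c u \<in> \<phi> ` S" by blast
qed

lemma subspace_lin_on_preimage:
  assumes "module s1" "module s2" "module.subspace s1 S" "lin_on s1 s2 S \<phi>"
    and "module.subspace s2 T"
  shows "module.subspace s1 {x \<in> S. \<phi> x \<in> T}"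
proof (rule module.subspaceI[OF assms(1)])
  show "0 \<in> {x \<in> S. \<phi> x \<in> T}"
    using lin_on_zero[OF assms(1,3,4)] module.subspace_0[OF assms(1,3)]
      module.subspace_0[OF assms(2,5)] by simp
next
  fix x y assume "x \<in> {x \<in> S. \<phi> x \<in> T}" "y \<in> {x \<in> S. \<phi> x \<in> T}"
  then show "x + y \<in> {x \<in> S. \<phi> x \<in> T}"
    using assms(4) module.subspace_add[OF assms(1,3)] module.subspace_add[OF assms(2,5)]
    by (simp add: lin_on_def)
next
  fix c x assume "x \<in> {x \<in> S. \<phi> x \<in> T}"
  then show "s1 c x \<in> {x \<in> S. \<phi> x \<in> T}"
    using assms(4) module.subspace_scale[OF assms(1,3)] module.subspace_scale[OF assms(2,5)]
    by (simp add: lin_on_def)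
qed

lemma lin_on_span_image:
  assumes "module s1" "module s2" "module.subspace s1 S" "lin_on s1 s2 S \<phi>" "B \<subseteq> S"
  shows "\<phi> ` module.span s1 B = module.span s2 (\<phi> ` B)"
proof
  have "module.span s1 B \<subseteq> {x \<in> S. \<phi> x \<in> module.span s2 (\<phi> ` B)}"
  proof (rule module.span_minimal[OF assms(1)])
    show "B \<subseteq> {x \<in> S. \<phi> x \<in> module.span s2 (\<phi> ` B)}"
      using assms(5) module.span_base[OF assms(2)] by blast
    show "module.subspace s1 {x \<in> S. \<phi> x \<in> module.span s2 (\<phi> ` B)}"
      by (rule subspace_lin_on_preimage[OF assms(1-4) module.subspace_span[OF assms(2)]])
  qed
  then show "\<phi> ` module.span s1 B \<subseteq> module.span s2 (\<phi> ` B)" by blast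
next
  have "module.span s1 B \<subseteq> S"
    using module.span_minimal[OF assms(1,5,3)] .
  then have "lin_on s1 s2 (module.span s1 B) \<phi>"
    by (rule lin_on_subset[OF assms(4)])
  then have "module.subspace s2 (\<phi> ` module.span s1 B)"
    by (rule subspace_image[OF assms(1,2) module.subspace_span[OF assms(1)]])
  then show "module.span s2 (\<phi> ` B) \<subseteq> \<phi> ` module.span s1 B"
    using module.span_superset[OF assms(1)] by (intro module.span_minimal[OF assms(2)]) auto
qed

lemma fin_dim_image:
  assumes "module s1" "module s2" "module.subspace s1 S" "lin_on s1 s2 S \<phi>" "fin_dim s1 S"
  shows "fin_dim s2 (\<phi> ` S)"
proof -
  obtain B where B: "finite B" "module.span s1 B = S"
    using assms(5) by (auto simp: fin_dim_def)
  then have "\<phi> ` S = module.span s2 (\<phi> ` B)"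
    using lin_on_span_image[OF assms(1-4)] module.span_superset[OF assms(1)] by blast
  with B(1) show ?thesis
    unfolding fin_dim_def by blast
qed

lemma lin_on_inv_into:
  assumes "module s1" "module s2" "module.subspace s1 S" "lin_on s1 s2 S \<phi>"
    and "bij_betw \<phi> S T"
  shows "lin_on s2 s1 T (inv_into S \<phi>)"
proof -
  let ?\<psi> = "inv_into S \<phi>"
  have inv: "?\<psi> t \<in> S" "\<phi> (?\<psi> t) = t" if "t \<in> T" for t
    using that assms(5) by (auto simp: bij_betw_def inv_into_into f_inv_into_f)
  have inj: "?\<psi> (\<phi> x) = x" if "x \<in> S" for x
    using that assms(5) by (simp add: bij_betw_def)
  show ?thesis
  proof (rule lin_onI)
    fix t u assume "t \<in> T" "u \<in> T"
    then have "?\<psi> t + ?\<psi> u \<in> S" "\<phi> (?\<psi> t + ?\<psi> u) = t + u"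
      using assms(4) inv module.subspace_add[OF assms(1,3)] by (simp_all add: lin_on_def)
    then show "?\<psi> (t + u) = ?\<psi> t + ?\<psi> u"
      using inj[of "?\<psi> t + ?\<psi> u"] by simp
  next
    fix c t assume "t \<in> T"
    then have "s1 c (?\<psi> t) \<in> S" "\<phi> (s1 c (?\<psi> t)) = s2 c t"
      using assms(4) inv module.subspace_scale[OF assms(1,3)] by (simp_all add: lin_on_def)
    then show "?\<psi> (s2 c t) = s1 c (?\<psi> t)"
      using inj[of "s1 c (?\<psi> t)"] by simp
  qed
qed

lemma fin_dim_bij_betw:
  assumes "module s1" "module s2" "module.subspace s1 S" "lin_on s1 s2 S \<phi>"
    and "bij_betw \<phi> S T" "fin_dim s2 T"
  shows "fin_dim s1 S"
proof -
  have T: "T = \<phi> ` S"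
    using assms(5) by (simp add: bij_betw_def)
  then have "fin_dim s1 (inv_into S \<phi> ` T)"
    using subspace_image[OF assms(1-4)] lin_on_inv_into[OF assms(1-5)] assms(6)
    by (intro fin_dim_image[OF assms(2,1)]) simp_all
  then show ?thesis
    using assms(5) T by (simp add: bij_betw_def inv_into_image_cancel)
qed

lemma fin_dim_extension:
  assumes "module s1" "module s2" "module.subspace s1 V" "lin_on s1 s2 V p"
    and "fin_dim s1 {v \<in> V. p v = 0}" "fin_dim s2 (p ` V)"
  shows "fin_dim s1 V"
proof -
  obtain BK where BK: "finite BK" "module.span s1 BK = {v \<in> V. p v = 0}"
    using assms(5) by (auto simp: fin_dim_def)
  obtain BN where BN: "finite BN" "module.span s2 BN = p ` V"
    using assms(6) by (auto simp: fin_dim_def)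
  then have "BN \<subseteq> p ` V"
    using module.span_superset[OF assms(2)] by metis
  then obtain BV where BV: "BV \<subseteq> V" "finite BV" "BN = p ` BV"
    using finite_subset_image[OF BN(1)] by metis
  have "BK \<subseteq> V"
    using BK(2) module.span_superset[OF assms(1), of BK] by auto
  then have span_V: "module.span s1 (BK \<union> BV) \<subseteq> V"
    using BV(1) by (intro module.span_minimal[OF assms(1) _ assms(3)]) auto
  have "V \<subseteq> module.span s1 (BK \<union> BV)"
  proof
    fix v assume v: "v \<in> V"
    have "p v \<in> p ` module.span s1 BV"
      using lin_on_span_image[OF assms(1-4) BV(1)] BV(3) BN(2) v by simp
    then obtain w where w: "w \<in> module.span s1 BV" "p w = p v" by auto
    have "w \<in> V"
      using w(1) module.span_minimal[OF assms(1) BV(1) assms(3)] by auto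
    then have "v - w \<in> module.span s1 BK"
      using BK(2) w(2) lin_on_diff[OF assms(1,3,4) v] module.subspace_diff[OF assms(1,3) v]
      by simp
    then have "v - w \<in> module.span s1 (BK \<union> BV)" "w \<in> module.span s1 (BK \<union> BV)"
      using w(1) module.span_mono[OF assms(1), of BK "BK \<union> BV"]
        module.span_mono[OF assms(1), of BV "BK \<union> BV"] by auto
    then have "v - w + w \<in> module.span s1 (BK \<union> BV)"
      by (rule module.span_add[OF assms(1)])
    then show "v \<in> module.span s1 (BK \<union> BV)" by simp
  qed
  with span_V BK(1) BV(2) show ?thesis
    unfolding fin_dim_def by blast
qed

lemma
  assumes "klin_cat E"
  shows klin_cat_module: "module (msc E)"
    and klin_cat_Hom_subspace: "x \<in> Ob E \<Longrightarrow> y \<in> Ob E \<Longrightarrow> module.subspace (msc E) (Hom E x y)"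
    and klin_cat_ident: "x \<in> Ob E \<Longrightarrow> ident E x \<in> Hom E x x"
    and klin_cat_cmp: "\<lbrakk>x \<in> Ob E; y \<in> Ob E; z \<in> Ob E; g \<in> Hom E x y; h \<in> Hom E y z\<rbrakk>
      \<Longrightarrow> cmp E x y z h g \<in> Hom E x z"
  using assms by (simp_all add: klin_cat_def module_iff_vector_space)

lemma obj_less_trans: "obj_less E a b \<Longrightarrow> obj_less E b c \<Longrightarrow> obj_less E a c"
  unfolding obj_less_def obj_le_def by (meson tranclp_trans)

lemma wf_obj_less_on:
  assumes "finite S"
  shows "wf {(a, b). a \<in> S \<and> b \<in> S \<and> obj_less E a b}"
proof (rule wf_finite_segments)
  show "irrefl {(a, b). a \<in> S \<and> b \<in> S \<and> obj_less E a b}"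
    by (simp add: irrefl_def obj_less_def)
  show "trans {(a, b). a \<in> S \<and> b \<in> S \<and> obj_less E a b}"
    by (auto simp: trans_def dest: obj_less_trans)
  show "finite {a. (a, b) \<in> {(a, b). a \<in> S \<and> b \<in> S \<and> obj_less E a b}}" for b
    by (rule finite_subset[OF _ assms]) blast
qed

section \<open>Supports of module elements\<close>

definition rmod_support :: "('o, 'a, 'k) klincat \<Rightarrow> ('o, 'a, 'w::zero) rmod \<Rightarrow> 'o \<Rightarrow> 'w \<Rightarrow> 'o set"
  where "rmod_support E M y m = {x \<in> Ob E. \<exists>f\<in>Hom E x y. Act M x y f m \<noteq> 0}"

definition finitely_supported :: "('o, 'a, 'k) klincat \<Rightarrow> ('o, 'a, 'w::zero) rmod \<Rightarrow> bool"
  where "finitely_supported E M \<longleftrightarrow> (\<forall>y\<in>Ob E. \<forall>m\<in>Val M y. finite (rmod_support E M y m))"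

lemma rmod_iso_lin_on: "rmod_iso E s1 M1 s2 M2 \<phi> \<Longrightarrow> x \<in> Ob E \<Longrightarrow> lin_on s1 s2 (Val M1 x) (\<phi> x)"
  by (simp add: rmod_iso_def rmod_hom_def)

lemma rmod_iso_bij_betw:
  "rmod_iso E s1 M1 s2 M2 \<phi> \<Longrightarrow> x \<in> Ob E \<Longrightarrow> bij_betw (\<phi> x) (Val M1 x) (Val M2 x)"
  by (simp add: rmod_iso_def)

lemma rmod_iso_Act:
  "\<lbrakk>rmod_iso E s1 M1 s2 M2 \<phi>; x \<in> Ob E; y \<in> Ob E; f \<in> Hom E x y; m \<in> Val M1 y\<rbrakk>
    \<Longrightarrow> \<phi> x (Act M1 x y f m) = Act M2 x y f (\<phi> y m)"
  by (simp add: rmod_iso_def rmod_hom_def)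

lemma finitely_supported_Upsilon:
  assumes "klin_cat E" "is_rcomod E sc N"
  shows "finitely_supported E (Upsilon E N)"
  unfolding finitely_supported_def
proof (intro ballI)
  fix y n assume y: "y \<in> Ob E" and n: "n \<in> Val (Upsilon E N) y"
  obtain n0 where "n0 \<in> Car N" "n = Coact N n0 y y (ident E y)"
    using n by (auto simp: Upsilon_def)
  then have "n \<in> Car N"
    using y klin_cat_ident[OF assms(1) y] assms(2) by (simp add: is_rcomod_def)
  then have "finite {(x, y). x \<in> Ob E \<and> y \<in> Ob E \<and> (\<exists>f\<in>Hom E x y. Coact N n x y f \<noteq> 0)}"
    using assms(2) by (simp add: is_rcomod_def)
  moreover have "rmod_support E (Upsilon E N) y n
      \<subseteq> fst ` {(x, y). x \<in> Ob E \<and> y \<in> Ob E \<and> (\<exists>f\<in>Hom E x y. Coact N n x y f \<noteq> 0)}"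
    using y by (force simp: rmod_support_def Upsilon_def)
  ultimately show "finite (rmod_support E (Upsilon E N) y n)"
    by (meson finite_imageI finite_subset)
qed

locale right_module =
  fixes E :: "('o, 'a::ab_group_add, 'k::field) klincat"
    and s :: "'k \<Rightarrow> 'm::ab_group_add \<Rightarrow> 'm" and M :: "('o, 'a, 'm) rmod"
  assumes klin_cat: "klin_cat E" and is_rmod: "is_rmod E s M"
begin

lemma vector_space: "vector_space s"
  using is_rmod by (simp add: is_rmod_def)

lemma module: "module s"
  using vector_space by (simp add: module_iff_vector_space)

lemma Val_subspace: "x \<in> Ob E \<Longrightarrow> module.subspace s (Val M x)"
  using is_rmod by (simp add: is_rmod_def)

lemma zero_in_Val: "x \<in> Ob E \<Longrightarrow> 0 \<in> Val M x"
  using module.subspace_0[OF module Val_subspace] .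

lemma Act_in_Val: "\<lbrakk>x \<in> Ob E; y \<in> Ob E; f \<in> Hom E x y; m \<in> Val M y\<rbrakk> \<Longrightarrow> Act M x y f m \<in> Val M x"
  using is_rmod by (simp add: is_rmod_def)

lemma Act_lin: "\<lbrakk>x \<in> Ob E; y \<in> Ob E; f \<in> Hom E x y\<rbrakk> \<Longrightarrow> lin_on s s (Val M y) (Act M x y f)"
  using is_rmod by (simp add: is_rmod_def)

lemma Act_lin_Hom:
  "\<lbrakk>x \<in> Ob E; y \<in> Ob E; m \<in> Val M y\<rbrakk> \<Longrightarrow> lin_on (msc E) s (Hom E x y) (\<lambda>f. Act M x y f m)"
  using is_rmod by (simp add: is_rmod_def)

lemma Act_ident: "\<lbrakk>x \<in> Ob E; m \<in> Val M x\<rbrakk> \<Longrightarrow> Act M x x (ident E x) m = m"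
  using is_rmod by (simp add: is_rmod_def)

lemma Act_cmp:
  "\<lbrakk>x \<in> Ob E; y \<in> Ob E; z \<in> Ob E; g \<in> Hom E x y; h \<in> Hom E y z; m \<in> Val M z\<rbrakk>
    \<Longrightarrow> Act M x z (cmp E x y z h g) m = Act M x y g (Act M y z h m)"
  using is_rmod by (simp add: is_rmod_def)

lemma Act_zero: "\<lbrakk>x \<in> Ob E; y \<in> Ob E; f \<in> Hom E x y\<rbrakk> \<Longrightarrow> Act M x y f 0 = 0"
  using lin_on_zero[OF module Val_subspace Act_lin] by blast

lemma Act_zero_Hom: "\<lbrakk>x \<in> Ob E; y \<in> Ob E; m \<in> Val M y\<rbrakk> \<Longrightarrow> Act M x y 0 m = 0"
  using lin_on_zero[OF klin_cat_module[OF klin_cat] klin_cat_Hom_subspace[OF klin_cat] Act_lin_Hom]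
  by blast

lemma Act_sum_cmp:
  assumes w: "w \<in> Ob E" and z: "z \<in> Ob E" and m: "m \<in> Val M z"
    and factors: "\<And>j. j < n \<Longrightarrow> xs j \<in> Ob E \<and> g j \<in> Hom E w (xs j) \<and> h j \<in> Hom E (xs j) z"
  shows "Act M w z (\<Sum>j<n. cmp E w (xs j) z (h j) (g j)) m
    = (\<Sum>j<n. Act M w (xs j) (g j) (Act M (xs j) z (h j) m))"
proof -
  have "Act M w z (\<Sum>j<n. cmp E w (xs j) z (h j) (g j)) m
      = (\<Sum>j<n. Act M w z (cmp E w (xs j) z (h j) (g j)) m)"
  proof (rule lin_on_sum[OF klin_cat_module[OF klin_cat] klin_cat_Hom_subspace[OF klin_cat w z]
        Act_lin_Hom[OF w z m]])
    fix j assume "j \<in> {..<n}"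
    then have "xs j \<in> Ob E" "g j \<in> Hom E w (xs j)" "h j \<in> Hom E (xs j) z"
      using factors by auto
    then show "cmp E w (xs j) z (h j) (g j) \<in> Hom E w z"
      by (rule klin_cat_cmp[OF klin_cat w _ z])
  qed
  also have "\<dots> = (\<Sum>j<n. Act M w (xs j) (g j) (Act M (xs j) z (h j) m))"
  proof (rule sum.cong)
    fix j assume "j \<in> {..<n}"
    then have "xs j \<in> Ob E" "g j \<in> Hom E w (xs j)" "h j \<in> Hom E (xs j) z"
      using factors by auto
    then show "Act M w z (cmp E w (xs j) z (h j) (g j)) m = Act M w (xs j) (g j) (Act M (xs j) z (h j) m)"
      using Act_cmp[OF w _ z _ _ m] by blast
  qed simp
  finally show ?thesis .
qed

lemma support_Act_subset:
  assumes "x \<in> Ob E" "y \<in> Ob E" "f \<in> Hom E x y" "m \<in> Val M y"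
  shows "rmod_support E M x (Act M x y f m) \<subseteq> rmod_support E M y m"
proof
  fix w assume "w \<in> rmod_support E M x (Act M x y f m)"
  then obtain g where w: "w \<in> Ob E" "g \<in> Hom E w x" "Act M w x g (Act M x y f m) \<noteq> 0"
    by (auto simp: rmod_support_def)
  then have "Act M w y (cmp E w x y f g) m \<noteq> 0"
    using Act_cmp[OF w(1) assms(1,2) w(2) assms(3,4)] by simp
  moreover have "cmp E w x y f g \<in> Hom E w y"
    using klin_cat_cmp[OF klin_cat w(1) assms(1,2) w(2) assms(3)] .
  ultimately show "w \<in> rmod_support E M y m"
    using w(1) by (auto simp: rmod_support_def)
qed

lemma mem_support_self:
  assumes "y \<in> Ob E" "m \<in> Val M y" "m \<noteq> 0"
  shows "y \<in> rmod_support E M y m"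
  using assms Act_ident[OF assms(1,2)] klin_cat_ident[OF klin_cat assms(1)]
  unfolding rmod_support_def by force

lemma subspace_support_subset:
  assumes y: "y \<in> Ob E"
  shows "module.subspace s {m \<in> Val M y. rmod_support E M y m \<subseteq> T}"
proof (rule module.subspaceI[OF module])
  show "0 \<in> {m \<in> Val M y. rmod_support E M y m \<subseteq> T}"
    using zero_in_Val[OF y] Act_zero y by (auto simp: rmod_support_def)
next
  fix a b assume a: "a \<in> {m \<in> Val M y. rmod_support E M y m \<subseteq> T}"
    and b: "b \<in> {m \<in> Val M y. rmod_support E M y m \<subseteq> T}"
  have "rmod_support E M y (a + b) \<subseteq> rmod_support E M y a \<union> rmod_support E M y b"
  proof
    fix x assume "x \<in> rmod_support E M y (a + b)"
    then obtain f where x: "x \<in> Ob E" "f \<in> Hom E x y" "Act M x y f (a + b) \<noteq> 0"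
      by (auto simp: rmod_support_def)
    then have "Act M x y f a + Act M x y f b \<noteq> 0"
      using lin_on_add[OF Act_lin[OF x(1) y x(2)]] a b by simp
    then show "x \<in> rmod_support E M y a \<union> rmod_support E M y b"
      using x(1,2) by (auto simp: rmod_support_def)
  qed
  then show "a + b \<in> {m \<in> Val M y. rmod_support E M y m \<subseteq> T}"
    using a b module.subspace_add[OF module Val_subspace[OF y]] by auto
next
  fix c a assume a: "a \<in> {m \<in> Val M y. rmod_support E M y m \<subseteq> T}"
  have "rmod_support E M y (s c a) \<subseteq> rmod_support E M y a"
  proof
    fix x assume "x \<in> rmod_support E M y (s c a)"
    then obtain f where x: "x \<in> Ob E" "f \<in> Hom E x y" "Act M x y f (s c a) \<noteq> 0"
      by (auto simp: rmod_support_def)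
    then have "s c (Act M x y f a) \<noteq> 0"
      using lin_on_scale[OF Act_lin[OF x(1) y x(2)]] a by simp
    then have "Act M x y f a \<noteq> 0"
      using module.scale_zero_right[OF module] by auto
    then show "x \<in> rmod_support E M y a"
      using x(1,2) by (auto simp: rmod_support_def)
  qed
  then show "s c a \<in> {m \<in> Val M y. rmod_support E M y m \<subseteq> T}"
    using a module.subspace_scale[OF module Val_subspace[OF y]] by auto
qed

lemma finite_UN_support:
  assumes "y \<in> Ob E" "V \<subseteq> Val M y" "fin_dim s V"
    and "\<And>v. v \<in> V \<Longrightarrow> finite (rmod_support E M y v)"
  shows "finite (\<Union>v\<in>V. rmod_support E M y v)"
proof -
  obtain B where B: "finite B" "module.span s B = V"
    using assms(3) by (auto simp: fin_dim_def)
  have BV: "B \<subseteq> V"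
    using B(2) module.span_superset[OF module, of B] by auto
  let ?T = "\<Union>b\<in>B. rmod_support E M y b"
  have "module.span s B \<subseteq> {m \<in> Val M y. rmod_support E M y m \<subseteq> ?T}"
    using BV assms(2)
    by (intro module.span_minimal[OF module _ subspace_support_subset[OF assms(1)]]) auto
  then have "(\<Union>v\<in>V. rmod_support E M y v) \<subseteq> ?T"
    using B(2) by auto
  moreover have "finite ?T"
    using B(1) BV assms(4) by auto
  ultimately show ?thesis
    by (rule finite_subset)
qed

lemma finite_UN_support_Hom:
  assumes x: "x \<in> Ob E" and z: "z \<in> Ob E" and m: "m \<in> Val M z"
    and "fin_dim (msc E) (Hom E x z)"
    and "\<And>h. h \<in> Hom E x z \<Longrightarrow> finite (rmod_support E M x (Act M x z h m))"
  shows "finite (\<Union>h\<in>Hom E x z. rmod_support E M x (Act M x z h m))"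
proof -
  have "fin_dim s ((\<lambda>h. Act M x z h m) ` Hom E x z)"
    by (rule fin_dim_image[OF klin_cat_module[OF klin_cat] module klin_cat_Hom_subspace[OF klin_cat x z]
          Act_lin_Hom[OF x z m] assms(4)])
  moreover have "(\<lambda>h. Act M x z h m) ` Hom E x z \<subseteq> Val M x"
    using Act_in_Val[OF x z _ m] by blast
  ultimately have "finite (\<Union>v\<in>(\<lambda>h. Act M x z h m) ` Hom E x z. rmod_support E M x v)"
    using assms(5) by (intro finite_UN_support[OF x]) auto
  then show ?thesis
    by (simp add: image_image)
qed

lemma support_subset_factorization:
  assumes z: "z \<in> Ob E" and m: "m \<in> Val M z" and X: "X \<subseteq> Ob E"
    and factor: "\<forall>w\<in>Ob E. obj_less E w z \<longrightarrow> (\<forall>f\<in>Hom E w z.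
      \<exists>(n::nat) xs g h. (\<forall>j<n. xs j \<in> X \<and> g j \<in> Hom E w (xs j) \<and> h j \<in> Hom E (xs j) z)
        \<and> f = (\<Sum>j<n. cmp E w (xs j) z (h j) (g j)))"
  shows "rmod_support E M z m \<subseteq> {w \<in> Ob E. obj_le E z w \<and> obj_le E w z}
    \<union> (\<Union>x\<in>X. \<Union>h\<in>Hom E x z. rmod_support E M x (Act M x z h m))"
proof
  fix w assume "w \<in> rmod_support E M z m"
  then obtain f where w: "w \<in> Ob E" and f: "f \<in> Hom E w z" and nz: "Act M w z f m \<noteq> 0"
    by (auto simp: rmod_support_def)
  have "f \<noteq> 0"
    using nz Act_zero_Hom[OF w z m] by auto
  with w z f have "obj_le E w z"
    unfolding obj_le_def hom_nz_def by blast
  show "w \<in> {w \<in> Ob E. obj_le E z w \<and> obj_le E w z}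
    \<union> (\<Union>x\<in>X. \<Union>h\<in>Hom E x z. rmod_support E M x (Act M x z h m))"
  proof (cases "obj_le E z w")
    case True
    with w \<open>obj_le E w z\<close> show ?thesis by blast
  next
    case False
    with \<open>obj_le E w z\<close> have "obj_less E w z"
      by (simp add: obj_less_def)
    then obtain n xs g h
      where gh: "\<forall>j<(n::nat). xs j \<in> X \<and> g j \<in> Hom E w (xs j) \<and> h j \<in> Hom E (xs j) z"
        and f_eq: "f = (\<Sum>j<n. cmp E w (xs j) z (h j) (g j))"
      using bspec[OF factor w] f by blast
    have "Act M w z f m = (\<Sum>j<n. Act M w (xs j) (g j) (Act M (xs j) z (h j) m))"
      unfolding f_eq using gh X by (intro Act_sum_cmp[OF w z m]) blast
    with nz have "(\<Sum>j<n. Act M w (xs j) (g j) (Act M (xs j) z (h j) m)) \<noteq> 0"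
      by simp
    then obtain j where j: "j < n" and "Act M w (xs j) (g j) (Act M (xs j) z (h j) m) \<noteq> 0"
      by (rule sum.not_neutral_contains_not_neutral) simp
    with w gh have "w \<in> rmod_support E M (xs j) (Act M (xs j) z (h j) m)"
      by (auto simp: rmod_support_def)
    with gh j show ?thesis
      by blast
  qed
qed

lemma finitely_supported_iso:
  assumes iso: "rmod_iso E s M s' M' \<phi>" and "finitely_supported E M'"
  shows "finitely_supported E M"
  unfolding finitely_supported_def
proof (intro ballI)
  fix y m assume y: "y \<in> Ob E" and m: "m \<in> Val M y"
  have "rmod_support E M y m \<subseteq> rmod_support E M' y (\<phi> y m)"
  proof
    fix x assume "x \<in> rmod_support E M y m"
    then obtain f where x: "x \<in> Ob E" "f \<in> Hom E x y" "Act M x y f m \<noteq> 0"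
      by (auto simp: rmod_support_def)
    have "inj_on (\<phi> x) (Val M x)"
      using rmod_iso_bij_betw[OF iso x(1)] by (simp add: bij_betw_def)
    then have "\<phi> x (Act M x y f m) \<noteq> \<phi> x 0"
      using x(3) Act_in_Val[OF x(1) y x(2) m] zero_in_Val[OF x(1)] by (auto dest: inj_onD)
    moreover have "\<phi> x 0 = 0"
      using lin_on_zero[OF module Val_subspace[OF x(1)] rmod_iso_lin_on[OF iso x(1)]] .
    ultimately have "Act M' x y f (\<phi> y m) \<noteq> 0"
      using rmod_iso_Act[OF iso x(1) y x(2) m] by simp
    then show "x \<in> rmod_support E M' y (\<phi> y m)"
      using x(1,2) by (auto simp: rmod_support_def)
  qed
  moreover have "\<phi> y m \<in> Val M' y"
    using rmod_iso_bij_betw[OF iso y] m by (auto simp: bij_betw_def)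
  ultimately show "finite (rmod_support E M y m)"
    using assms(2) y by (auto simp: finitely_supported_def intro: finite_subset)
qed

lemma locally_finite_rmod_iso:
  assumes "rmod_iso E s M s' M' \<phi>" "module s'" "locally_finite_rmod E s' M'"
  shows "locally_finite_rmod E s M"
  unfolding locally_finite_rmod_def
proof
  fix x assume x: "x \<in> Ob E"
  show "fin_dim s (Val M x)"
    using fin_dim_bij_betw[OF module assms(2) Val_subspace[OF x] rmod_iso_lin_on[OF assms(1) x]
        rmod_iso_bij_betw[OF assms(1) x]] assms(3) x
    by (simp add: locally_finite_rmod_def)
qed

lemma in_Upsilon_classD:
  fixes T :: "'c::ab_group_add itself"
  assumes "in_Upsilon_class E s M T"
  shows "locally_finite_rmod E s M" "finitely_supported E M"
proof -
  obtain sc and N :: "('o, 'a, 'c) rcomod" and \<phi>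
    where N: "is_rcomod E sc N" "locally_finite_rcomod E sc N"
      and iso: "rmod_iso E s M sc (Upsilon E N) \<phi>"
    using assms by (auto simp: in_Upsilon_class_def rmod_isomorphic_def)
  have "module sc"
    using N(1) by (simp add: is_rcomod_def module_iff_vector_space)
  then show "locally_finite_rmod E s M"
    using locally_finite_rmod_iso[OF iso] N(2) by (simp add: locally_finite_rcomod_def)
  show "finitely_supported E M"
    using finitely_supported_iso[OF iso finitely_supported_Upsilon[OF klin_cat N(1)]] .
qed

end

section \<open>The comodule of finitely supported sections\<close>

lemma sum_fun_apply: "(\<Sum>x\<in>A. f x) z = (\<Sum>x\<in>A. f x z)"
  by (induction A rule: infinite_finite_induct) auto

lemma fun_upd_zero_add: "(0 :: 'a \<Rightarrow> 'b::monoid_add)(x := u + v) = 0(x := u) + 0(x := v)"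
  by (simp add: fun_eq_iff)

definition scale_fun :: "('k \<Rightarrow> 'm \<Rightarrow> 'm) \<Rightarrow> 'k \<Rightarrow> ('o \<Rightarrow> 'm) \<Rightarrow> 'o \<Rightarrow> 'm"
  where "scale_fun s c n = (\<lambda>z. s c (n z))"

lemma vector_space_scale_fun: "vector_space s \<Longrightarrow> vector_space (scale_fun s)"
  unfolding vector_space_def scale_fun_def by (simp add: fun_eq_iff)

definition fin_sections :: "('o, 'a, 'k) klincat \<Rightarrow> ('o, 'a, 'm::zero) rmod \<Rightarrow> ('o \<Rightarrow> 'm) set"
  where "fin_sections E M =
    {n. (\<forall>z. z \<notin> Ob E \<longrightarrow> n z = 0) \<and> (\<forall>z\<in>Ob E. n z \<in> Val M z) \<and> finite {z. n z \<noteq> 0}}"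

text \<open>The direct sum of the values of M, as finitely supported sections; 0(x := m) is m placed
  in the x-summand, and ev_f for f : x -> y acts through the y-summand into the x-summand.\<close>

definition rcomod_of_rmod :: "('o, 'a, 'k) klincat \<Rightarrow> ('o, 'a, 'm::zero) rmod \<Rightarrow> ('o, 'a, 'o \<Rightarrow> 'm) rcomod"
  where "rcomod_of_rmod E M = \<lparr>Car = fin_sections E M, Coact = (\<lambda>n x y f. 0(x := Act M x y f (n y)))\<rparr>"

lemma Car_rcomod_of_rmod: "Car (rcomod_of_rmod E M) = fin_sections E M"
  and Coact_rcomod_of_rmod: "Coact (rcomod_of_rmod E M) = (\<lambda>n x y f. 0(x := Act M x y f (n y)))"
  by (simp_all add: rcomod_of_rmod_def)

lemma fin_sections_sum_fun_upd_zero: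
  assumes "n \<in> fin_sections E M"
  shows "(\<Sum>x\<in>{x \<in> Ob E. n x \<noteq> 0}. 0(x := n x)) = n"
proof
  fix z
  have "finite {x \<in> Ob E. n x \<noteq> 0}"
    using assms by (simp add: fin_sections_def)
  then have "(\<Sum>x\<in>{x \<in> Ob E. n x \<noteq> 0}. 0(x := n x)) z = (if z \<in> Ob E \<and> n z \<noteq> 0 then n z else 0)"
    by (simp only: sum_fun_apply fun_upd_apply zero_fun_apply) (simp add: sum.delta')
  then show "(\<Sum>x\<in>{x \<in> Ob E. n x \<noteq> 0}. 0(x := n x)) z = n z"
    using assms by (auto simp: fin_sections_def)
qed

context right_module
begin

lemma fin_sections_Val: "n \<in> fin_sections E M \<Longrightarrow> y \<in> Ob E \<Longrightarrow> n y \<in> Val M y"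
  by (simp add: fin_sections_def)

lemma module_scale_fun: "module (scale_fun s)"
  using vector_space_scale_fun[OF vector_space] by (simp add: module_iff_vector_space)

lemma fun_upd_zero_in_fin_sections: "x \<in> Ob E \<Longrightarrow> m \<in> Val M x \<Longrightarrow> 0(x := m) \<in> fin_sections E M"
  using zero_in_Val by (auto simp: fin_sections_def finite_subset[of _ "{x}"])

lemma fin_sections_subspace: "module.subspace (scale_fun s) (fin_sections E M)"
proof (rule module.subspaceI[OF module_scale_fun])
  show "0 \<in> fin_sections E M"
    using zero_in_Val by (simp add: fin_sections_def)
next
  fix a b assume a: "a \<in> fin_sections E M" and b: "b \<in> fin_sections E M"
  have "{z. (a + b) z \<noteq> 0} \<subseteq> {z. a z \<noteq> 0} \<union> {z. b z \<noteq> 0}"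
    by auto
  then show "a + b \<in> fin_sections E M"
    using a b module.subspace_add[OF module Val_subspace]
    by (auto simp: fin_sections_def intro: finite_subset)
next
  fix c a assume a: "a \<in> fin_sections E M"
  have "{z. s c (a z) \<noteq> 0} \<subseteq> {z. a z \<noteq> 0}"
    using module.scale_zero_right[OF module] by auto
  then show "scale_fun s c a \<in> fin_sections E M"
    using a module.subspace_scale[OF module Val_subspace] module.scale_zero_right[OF module]
    by (auto simp: fin_sections_def scale_fun_def intro: finite_subset)
qed

lemma fun_upd_zero_scale: "0(x := s c m) = scale_fun s c (0(x := m))"
  using module.scale_zero_right[OF module] by (simp add: scale_fun_def fun_eq_iff)

lemma finite_Coact_nonzero:
  assumes "finitely_supported E M" "n \<in> fin_sections E M"
  shows "finite {(x, y). x \<in> Ob E \<and> y \<in> Ob E \<and> (\<exists>f\<in>Hom E x y. 0(x := Act M x y f (n y)) \<noteq> 0)}"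
proof (rule finite_subset)
  show "{(x, y). x \<in> Ob E \<and> y \<in> Ob E \<and> (\<exists>f\<in>Hom E x y. 0(x := Act M x y f (n y)) \<noteq> 0)}
      \<subseteq> (SIGMA y:{y \<in> Ob E. n y \<noteq> 0}. rmod_support E M y (n y)) \<inverse>"
    using Act_zero by (auto simp: rmod_support_def fun_upd_idem_iff)
  show "finite ((SIGMA y:{y \<in> Ob E. n y \<noteq> 0}. rmod_support E M y (n y)) \<inverse>)"
    using assms by (auto simp: fin_sections_def finitely_supported_def)
qed

lemma is_rcomod_rcomod_of_rmod:
  assumes fs: "finitely_supported E M"
  shows "is_rcomod E (scale_fun s) (rcomod_of_rmod E M)"
proof -
  have Coact_in: "0(x := Act M x y f (n y)) \<in> fin_sections E M"
    if "n \<in> fin_sections E M" "x \<in> Ob E" "y \<in> Ob E" "f \<in> Hom E x y" for n x y f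
    using that by (simp add: fun_upd_zero_in_fin_sections Act_in_Val fin_sections_Val)
  have lin_section: "lin_on (scale_fun s) (scale_fun s) (fin_sections E M) (\<lambda>n. 0(x := Act M x y f (n y)))"
    if "x \<in> Ob E" "y \<in> Ob E" "f \<in> Hom E x y" for x y f
    using that lin_on_add[OF Act_lin] lin_on_scale[OF Act_lin] fin_sections_Val
    by (intro lin_onI) (simp_all add: fun_upd_zero_add fun_upd_zero_scale scale_fun_def)
  have lin_Hom: "lin_on (msc E) (scale_fun s) (Hom E x y) (\<lambda>f. 0(x := Act M x y f (n y)))"
    if "n \<in> fin_sections E M" "x \<in> Ob E" "y \<in> Ob E" for n x y
    using that lin_on_add[OF Act_lin_Hom] lin_on_scale[OF Act_lin_Hom] fin_sections_Val
    by (intro lin_onI) (simp_all add: fun_upd_zero_add fun_upd_zero_scale)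
  have counit: "(\<Sum>x\<in>{x \<in> Ob E. 0(x := Act M x x (ident E x) (n x)) \<noteq> 0}.
      0(x := Act M x x (ident E x) (n x))) = n"
    if n: "n \<in> fin_sections E M" for n
  proof -
    have "(\<Sum>x\<in>{x \<in> Ob E. 0(x := Act M x x (ident E x) (n x)) \<noteq> 0}.
        0(x := Act M x x (ident E x) (n x))) = (\<Sum>x\<in>{x \<in> Ob E. n x \<noteq> 0}. 0(x := n x))"
      using n by (intro sum.cong) (auto simp: Act_ident fin_sections_Val fun_upd_idem_iff
          dest: fin_sections_Val)
    then show ?thesis
      using fin_sections_sum_fun_upd_zero[OF n] by simp
  qed
  have coassoc: "0(x := Act M x z g ((0(z' := Act M z' y h (n y))) z))
      = (if z = z' then 0(x := Act M x y (cmp E x z y h g) (n y)) else 0)"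
    if "n \<in> fin_sections E M" "x \<in> Ob E" "z \<in> Ob E" "z' \<in> Ob E" "y \<in> Ob E"
      "g \<in> Hom E x z" "h \<in> Hom E z' y" for n x z z' y g h
    using that by (auto simp: Act_cmp Act_zero fin_sections_Val fun_upd_idem_iff)
  show ?thesis
    unfolding is_rcomod_def Car_rcomod_of_rmod Coact_rcomod_of_rmod
    by (intro conjI ballI vector_space_scale_fun[OF vector_space] fin_sections_subspace Coact_in
        lin_section lin_Hom finite_Coact_nonzero[OF fs] counit coassoc)
qed

lemma Val_Upsilon_rcomod_of_rmod:
  assumes x: "x \<in> Ob E"
  shows "Val (Upsilon E (rcomod_of_rmod E M)) x = (\<lambda>m. 0(x := m)) ` Val M x"
proof -
  have "Val (Upsilon E (rcomod_of_rmod E M)) x = (\<lambda>n. 0(x := n x)) ` fin_sections E M"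
    using x by (auto simp: Upsilon_def Car_rcomod_of_rmod Coact_rcomod_of_rmod Act_ident fin_sections_Val intro!: image_cong)
  also have "\<dots> = (\<lambda>m. 0(x := m)) ` Val M x"
  proof
    show "(\<lambda>n. 0(x := n x)) ` fin_sections E M \<subseteq> (\<lambda>m. 0(x := m)) ` Val M x"
      using x fin_sections_Val by blast
    show "(\<lambda>m. 0(x := m)) ` Val M x \<subseteq> (\<lambda>n. 0(x := n x)) ` fin_sections E M"
    proof
      fix u assume "u \<in> (\<lambda>m. 0(x := m)) ` Val M x"
      then obtain m where m: "m \<in> Val M x" "u = 0(x := m)" by blast
      then have "u = (\<lambda>n. 0(x := n x)) (0(x := m))" by simp
      then show "u \<in> (\<lambda>n. 0(x := n x)) ` fin_sections E M"
        using fun_upd_zero_in_fin_sections[OF x m(1)] by blast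
    qed
  qed
  finally show ?thesis .
qed

lemma rmod_iso_rcomod_of_rmod:
  "rmod_iso E s M (scale_fun s) (Upsilon E (rcomod_of_rmod E M)) (\<lambda>x m. 0(x := m))"
  unfolding rmod_iso_def rmod_hom_def
proof (intro conjI ballI)
  fix x assume x: "x \<in> Ob E"
  show "lin_on s (scale_fun s) (Val M x) (\<lambda>m. 0(x := m))"
    by (intro lin_onI) (simp_all add: fun_upd_zero_add fun_upd_zero_scale)
  show "bij_betw (\<lambda>m. 0(x := m)) (Val M x) (Val (Upsilon E (rcomod_of_rmod E M)) x)"
    unfolding Val_Upsilon_rcomod_of_rmod[OF x] by (intro inj_on_imp_bij_betw inj_onI) (metis fun_upd_same)
  fix m assume "m \<in> Val M x"
  then show "0(x := m) \<in> Val (Upsilon E (rcomod_of_rmod E M)) x"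
    unfolding Val_Upsilon_rcomod_of_rmod[OF x] by blast
next
  fix x y f m
  show "0(x := Act M x y f m) = Act (Upsilon E (rcomod_of_rmod E M)) x y f (0(y := m))"
    by (simp add: Upsilon_def Coact_rcomod_of_rmod)
qed

lemma in_Upsilon_classI:
  assumes "locally_finite_rmod E s M" "finitely_supported E M"
  shows "in_Upsilon_class E s M TYPE('o \<Rightarrow> 'm)"
proof -
  have "locally_finite_rmod E (scale_fun s) (Upsilon E (rcomod_of_rmod E M))"
    unfolding locally_finite_rmod_def
  proof
    fix x assume x: "x \<in> Ob E"
    have "lin_on s (scale_fun s) (Val M x) (\<lambda>m. 0(x := m))"
      using rmod_iso_lin_on[OF rmod_iso_rcomod_of_rmod x] .
    then show "fin_dim (scale_fun s) (Val (Upsilon E (rcomod_of_rmod E M)) x)"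
      unfolding Val_Upsilon_rcomod_of_rmod[OF x]
      using fin_dim_image[OF module module_scale_fun Val_subspace[OF x]] assms(1) x
      by (simp add: locally_finite_rmod_def)
  qed
  then show ?thesis
    unfolding in_Upsilon_class_def rmod_isomorphic_def locally_finite_rcomod_def
    using is_rcomod_rcomod_of_rmod[OF assms(2)] rmod_iso_rcomod_of_rmod by blast
qed

end

section \<open>Extensions\<close>

locale rmod_short_exact =
  L: right_module E sL L + M: right_module E sM M + N: right_module E sN N
  for E :: "('o, 'a::ab_group_add, 'k::field) klincat"
    and sL :: "'k \<Rightarrow> 'l::ab_group_add \<Rightarrow> 'l" and L :: "('o, 'a, 'l) rmod"
    and sM :: "'k \<Rightarrow> 'm::ab_group_add \<Rightarrow> 'm" and M :: "('o, 'a, 'm) rmod"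
    and sN :: "'k \<Rightarrow> 'n::ab_group_add \<Rightarrow> 'n" and N :: "('o, 'a, 'n) rmod"
    and i :: "'o \<Rightarrow> 'l \<Rightarrow> 'm" and p :: "'o \<Rightarrow> 'm \<Rightarrow> 'n" +
  assumes short_exact: "short_exact E sL L sM M sN N i p"
begin

lemma i_lin: "x \<in> Ob E \<Longrightarrow> lin_on sL sM (Val L x) (i x)"
  and i_Act: "\<lbrakk>x \<in> Ob E; y \<in> Ob E; f \<in> Hom E x y; l \<in> Val L y\<rbrakk>
    \<Longrightarrow> i x (Act L x y f l) = Act M x y f (i y l)"
  and p_lin: "x \<in> Ob E \<Longrightarrow> lin_on sM sN (Val M x) (p x)"
  and p_Act: "\<lbrakk>x \<in> Ob E; y \<in> Ob E; f \<in> Hom E x y; m \<in> Val M y\<rbrakk>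
    \<Longrightarrow> p x (Act M x y f m) = Act N x y f (p y m)"
  and p_in_Val: "\<lbrakk>x \<in> Ob E; m \<in> Val M x\<rbrakk> \<Longrightarrow> p x m \<in> Val N x"
  and p_image: "x \<in> Ob E \<Longrightarrow> p x ` Val M x = Val N x"
  and kernel_p: "x \<in> Ob E \<Longrightarrow> {m \<in> Val M x. p x m = 0} = i x ` Val L x"
  using short_exact by (auto simp: short_exact_def rmod_hom_def)

lemma locally_finite_rmod_extension:
  assumes "locally_finite_rmod E sL L" "locally_finite_rmod E sN N"
  shows "locally_finite_rmod E sM M"
  unfolding locally_finite_rmod_def
proof
  fix x assume x: "x \<in> Ob E"
  have "fin_dim sM {m \<in> Val M x. p x m = 0}"
    unfolding kernel_p[OF x] using assms(1) x
    by (intro fin_dim_image[OF L.module M.module L.Val_subspace[OF x] i_lin[OF x]])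
      (simp add: locally_finite_rmod_def)
  moreover have "fin_dim sN (p x ` Val M x)"
    unfolding p_image[OF x] using assms(2) x by (simp add: locally_finite_rmod_def)
  ultimately show "fin_dim sM (Val M x)"
    by (rule fin_dim_extension[OF M.module N.module M.Val_subspace[OF x] p_lin[OF x]])
qed

lemma finite_support_kernel:
  assumes fsL: "finitely_supported E L" and z: "z \<in> Ob E" and m: "m \<in> Val M z" "p z m = 0"
  shows "finite (rmod_support E M z m)"
proof -
  obtain l where l: "l \<in> Val L z" "m = i z l"
    using kernel_p[OF z] m by blast
  have "rmod_support E M z m \<subseteq> rmod_support E L z l"
  proof
    fix x assume "x \<in> rmod_support E M z m"
    then obtain f where x: "x \<in> Ob E" "f \<in> Hom E x z" "Act M x z f m \<noteq> 0"
      by (auto simp: rmod_support_def)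
    then have "Act L x z f l \<noteq> 0"
      using i_Act[OF x(1) z x(2) l(1)] lin_on_zero[OF L.module L.Val_subspace[OF x(1)] i_lin[OF x(1)]]
        l(2) by auto
    then show "x \<in> rmod_support E L z l"
      using x(1,2) by (auto simp: rmod_support_def)
  qed
  then show ?thesis
    using fsL z l(1) by (auto simp: finitely_supported_def intro: finite_subset)
qed

lemma finite_support_outside:
  assumes "finitely_supported E L" "z \<in> Ob E" "m \<in> Val M z"
    and "rmod_support E N z (p z m) \<subseteq> S" "z \<notin> S"
  shows "finite (rmod_support E M z m)"
proof -
  have "p z m = 0"
    using N.mem_support_self[OF assms(2) p_in_Val[OF assms(2,3)]] assms(4,5) by blast
  then show ?thesis
    by (rule finite_support_kernel[OF assms(1-3)])
qed

lemma support_p_Act_subset: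
  assumes "x \<in> Ob E" "z \<in> Ob E" "h \<in> Hom E x z" "m \<in> Val M z"
  shows "rmod_support E N x (p x (Act M x z h m)) \<subseteq> rmod_support E N z (p z m)"
  unfolding p_Act[OF assms] by (rule N.support_Act_subset[OF assms(1-3) p_in_Val[OF assms(2,4)]])

lemma finite_support_bounded:
  assumes lslf: "left_strictly_locally_finite E" and fsL: "finitely_supported E L"
    and S: "finite S"
  shows "z \<in> Ob E \<Longrightarrow> m \<in> Val M z \<Longrightarrow> rmod_support E N z (p z m) \<subseteq> S
    \<Longrightarrow> finite (rmod_support E M z m)"
  using wf_obj_less_on[OF S, of E]
proof (induction z arbitrary: m rule: wf_induct_rule)
  case (less z)
  note z = less.prems(1) and m = less.prems(2)
  show ?case
  proof (cases "z \<in> S")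
    case False
    then show ?thesis
      using finite_support_outside[OF fsL less.prems] by blast
  next
    case True
    have lfc: "locally_finite_cat E"
      using lslf by (simp add: left_strictly_locally_finite_def)
    obtain X where X: "finite X" "X \<subseteq> Ob E" "\<forall>x\<in>X. obj_less E x z"
      and factor: "\<forall>w\<in>Ob E. obj_less E w z \<longrightarrow> (\<forall>f\<in>Hom E w z.
        \<exists>(n::nat) xs g h. (\<forall>j<n. xs j \<in> X \<and> g j \<in> Hom E w (xs j) \<and> h j \<in> Hom E (xs j) z)
          \<and> f = (\<Sum>j<n. cmp E w (xs j) z (h j) (g j)))"
      using lslf z unfolding left_strictly_locally_finite_def by blast
    have UN_finite: "finite (\<Union>h\<in>Hom E x z. rmod_support E M x (Act M x z h m))"
      if x: "x \<in> Ob E" "obj_less E x z" for x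
    proof (rule M.finite_UN_support_Hom[OF x(1) z m])
      show "fin_dim (msc E) (Hom E x z)"
        using lfc x(1) z by (simp add: locally_finite_cat_def)
    next
      fix h assume h: "h \<in> Hom E x z"
      have v: "Act M x z h m \<in> Val M x"
        by (rule M.Act_in_Val[OF x(1) z h m])
      have supp: "rmod_support E N x (p x (Act M x z h m)) \<subseteq> S"
        using support_p_Act_subset[OF x(1) z h m] less.prems(3) by blast
      show "finite (rmod_support E M x (Act M x z h m))"
      proof (cases "x \<in> S")
        case True
        then show ?thesis
          using less.IH[of x] \<open>z \<in> S\<close> x v supp by simp
      next
        case False
        then show ?thesis
          by (rule finite_support_outside[OF fsL x(1) v supp])
      qed
    qed
    have "finite ({w \<in> Ob E. obj_le E z w \<and> obj_le E w z}
        \<union> (\<Union>x\<in>X. \<Union>h\<in>Hom E x z. rmod_support E M x (Act M x z h m)))"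
      using lfc z X UN_finite by (simp add: locally_finite_cat_def subset_iff)
    then show ?thesis
      by (rule finite_subset[OF M.support_subset_factorization[OF z m X(2) factor]])
  qed
qed

lemma finitely_supported_extension:
  assumes "left_strictly_locally_finite E" "finitely_supported E L" "finitely_supported E N"
  shows "finitely_supported E M"
  unfolding finitely_supported_def
proof (intro ballI)
  fix y m assume "y \<in> Ob E" "m \<in> Val M y"
  moreover have "finite (rmod_support E N y (p y m))"
    using assms(3) calculation p_in_Val by (simp add: finitely_supported_def)
  ultimately show "finite (rmod_support E M y m)"
    using finite_support_bounded[OF assms(1,2)] by blast
qed

end

theorem corollary6p4:
  fixes E :: "('o, 'a::ab_group_add, 'k::field) klincat"
    and sL :: "'k \<Rightarrow> 'l::ab_group_add \<Rightarrow> 'l" and L :: "('o, 'a, 'l) rmod"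
    and sM :: "'k \<Rightarrow> 'm::ab_group_add \<Rightarrow> 'm" and M :: "('o, 'a, 'm) rmod"
    and sN :: "'k \<Rightarrow> 'n::ab_group_add \<Rightarrow> 'n" and N :: "('o, 'a, 'n) rmod"
    and i :: "'o \<Rightarrow> 'l \<Rightarrow> 'm" and p :: "'o \<Rightarrow> 'm \<Rightarrow> 'n"
  assumes "klin_cat E"
    and "left_strictly_locally_finite E"
    and "is_rmod E sL L" and "is_rmod E sM M" and "is_rmod E sN N"
    and "short_exact E sL L sM M sN N i p"
    and "in_Upsilon_class E sL L TYPE('cL::ab_group_add)"
    and "in_Upsilon_class E sN N TYPE('cN::ab_group_add)"
  shows "in_Upsilon_class E sM M TYPE('o \<Rightarrow> 'm)"
proof -
  interpret rmod_short_exact E sL L sM M sN N i p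
    using assms(1,3-6) by unfold_locales
  have "locally_finite_rmod E sM M"
    using L.in_Upsilon_classD(1)[OF assms(7)] N.in_Upsilon_classD(1)[OF assms(8)]
    by (rule locally_finite_rmod_extension)
  moreover have "finitely_supported E M"
    using assms(2) L.in_Upsilon_classD(2)[OF assms(7)] N.in_Upsilon_classD(2)[OF assms(8)]
    by (rule finitely_supported_extension)
  ultimately show ?thesis
    by (rule M.in_Upsilon_classI)
qed

end
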